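(* Let $D\ge1$, let $Q_D$ be the $D$-dimensional hypercube on $X=\{0,1\}^D$ with adjacency matrix $A$, and let $B$ be a real matrix with rows and columns indexed by $X$. Then $B$ is $A$-like if and only if $B$ commutes with $A$ and $$\alpha^*_i\alpha^*_jB-\alpha^*_iB\alpha^*_j-\alpha^*_jB\alpha^*_i+B\alpha^*_i\alpha^*_j=0\qquad(1\le i<j\le D).$$
   Context: $Q_D$ is the graph with vertex set $X=\{0,1\}^D$ (sequences $x=(x_1,\ldots,x_D)$), two vertices adjacent iff they differ in exactly one coordinate. A matrix $B$ is $A$-like if $BA=AB$ and $B_{xy}=0$ for all $x,y\in X$ that are neither equal nor adjacent. For $1\le i\le D$, $\alpha^*_i$ is the diagonal matrix with $(x,x)$-entry $1$ if $x_i=0$ and $-1$ if $x_i=1$. *)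

theory Defs
  imports Complex_Main
begin

text \<open>Vertices of Q_D: x :: nat \<Rightarrow> bool, with coordinates x 1, ..., x D
  (True = 1, False = 0), and x i = False outside {1..D}.
  Matrices indexed by X are functions X \<Rightarrow> X \<Rightarrow> real; only entries on X \<times> X matter.\<close>

definition hypercube :: "nat \<Rightarrow> (nat \<Rightarrow> bool) set" where
  "hypercube D = {x. \<forall>i. x i \<longrightarrow> i \<in> {1..D}}"

definition hc_adjacent :: "nat \<Rightarrow> (nat \<Rightarrow> bool) \<Rightarrow> (nat \<Rightarrow> bool) \<Rightarrow> bool" where
  "hc_adjacent D x y \<longleftrightarrow> card {i \<in> {1..D}. x i \<noteq> y i} = 1"

definition hc_adj_matrix :: "nat \<Rightarrow> (nat \<Rightarrow> bool) \<Rightarrow> (nat \<Rightarrow> bool) \<Rightarrow> real" where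
  "hc_adj_matrix D x y = (if hc_adjacent D x y then 1 else 0)"

definition mmult :: "nat \<Rightarrow> ((nat \<Rightarrow> bool) \<Rightarrow> (nat \<Rightarrow> bool) \<Rightarrow> real)
    \<Rightarrow> ((nat \<Rightarrow> bool) \<Rightarrow> (nat \<Rightarrow> bool) \<Rightarrow> real) \<Rightarrow> (nat \<Rightarrow> bool) \<Rightarrow> (nat \<Rightarrow> bool) \<Rightarrow> real" where
  "mmult D M N x y = (\<Sum>z\<in>hypercube D. M x z * N z y)"

definition mat_eq_on :: "nat \<Rightarrow> ((nat \<Rightarrow> bool) \<Rightarrow> (nat \<Rightarrow> bool) \<Rightarrow> real)
    \<Rightarrow> ((nat \<Rightarrow> bool) \<Rightarrow> (nat \<Rightarrow> bool) \<Rightarrow> real) \<Rightarrow> bool" where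
  "mat_eq_on D M N \<longleftrightarrow> (\<forall>x\<in>hypercube D. \<forall>y\<in>hypercube D. M x y = N x y)"

definition alpha_star :: "nat \<Rightarrow> (nat \<Rightarrow> bool) \<Rightarrow> (nat \<Rightarrow> bool) \<Rightarrow> real" where
  "alpha_star i x y = (if x = y then (if x i then -1 else 1) else 0)"

definition A_like :: "nat \<Rightarrow> ((nat \<Rightarrow> bool) \<Rightarrow> (nat \<Rightarrow> bool) \<Rightarrow> real) \<Rightarrow> bool" where
  "A_like D B \<longleftrightarrow>
     mat_eq_on D (mmult D B (hc_adj_matrix D)) (mmult D (hc_adj_matrix D) B) \<and>
     (\<forall>x\<in>hypercube D. \<forall>y\<in>hypercube D. x \<noteq> y \<and> \<not> hc_adjacent D x y \<longrightarrow> B x y = 0)"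

end

theory Submission
  imports Defs
begin

text \<open>Each \<open>\<alpha>*\<^sub>i\<close> is diagonal with entries \<open>\<sigma>\<^sub>i x = \<plusminus>1\<close>, so the \<open>(x, y)\<close> entry of
  \<open>\<alpha>*\<^sub>i\<alpha>*\<^sub>jB - \<alpha>*\<^sub>iB\<alpha>*\<^sub>j - \<alpha>*\<^sub>jB\<alpha>*\<^sub>i + B\<alpha>*\<^sub>i\<alpha>*\<^sub>j\<close> factors as
  \<open>B x y \<cdot> (\<sigma>\<^sub>i x - \<sigma>\<^sub>i y) \<cdot> (\<sigma>\<^sub>j x - \<sigma>\<^sub>j y)\<close>. It vanishes exactly when \<open>B x y = 0\<close>
  or x and y agree in coordinate i or j. Hence all these combinations vanish iff
  \<open>B x y = 0\<close> whenever x and y differ in at least two coordinates, i.e. are neither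
  equal nor adjacent.\<close>

definition coord_sign :: "nat \<Rightarrow> (nat \<Rightarrow> bool) \<Rightarrow> real" where
  "coord_sign i x = (if x i then -1 else 1)"

lemma alpha_star_eq: "alpha_star i x z = (if x = z then coord_sign i x else 0)"
  by (simp add: alpha_star_def coord_sign_def)

lemma finite_hypercube: "finite (hypercube D)"
proof -
  have "hypercube D \<subseteq> (\<lambda>S i. i \<in> S) ` Pow {1..D}"
  proof
    fix x assume "x \<in> hypercube D"
    then have "x = (\<lambda>i. i \<in> {i. x i})" "{i. x i} \<in> Pow {1..D}"
      by (auto simp: hypercube_def)
    then show "x \<in> (\<lambda>S i. i \<in> S) ` Pow {1..D}" by blast
  qed
  then show ?thesis by (rule finite_subset) simp
qed

lemma mmult_diagonal_left:
  assumes "x \<in> hypercube D" and "\<And>z. z \<in> hypercube D \<Longrightarrow> M x z = (if x = z then d else 0)"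
  shows "mmult D M N x y = d * N x y"
proof -
  have "mmult D M N x y = (\<Sum>z\<in>hypercube D. if x = z then d * N x y else 0)"
    unfolding mmult_def by (rule sum.cong) (auto simp: assms(2))
  then show ?thesis using assms(1) by (simp add: finite_hypercube)
qed

lemma mmult_diagonal_right:
  assumes "y \<in> hypercube D" and "\<And>z. z \<in> hypercube D \<Longrightarrow> N z y = (if z = y then d else 0)"
  shows "mmult D M N x y = M x y * d"
proof -
  have "mmult D M N x y = (\<Sum>z\<in>hypercube D. if z = y then M x y * d else 0)"
    unfolding mmult_def by (rule sum.cong) (auto simp: assms(2))
  then show ?thesis using assms(1) by (simp add: finite_hypercube)
qed

lemma mmult_alpha_star_left:
  "x \<in> hypercube D \<Longrightarrow> mmult D (alpha_star i) M x y = coord_sign i x * M x y"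
  by (rule mmult_diagonal_left) (simp_all add: alpha_star_eq)

lemma mmult_alpha_star_right:
  "y \<in> hypercube D \<Longrightarrow> mmult D M (alpha_star i) x y = M x y * coord_sign i y"
  by (rule mmult_diagonal_right) (simp_all add: alpha_star_eq)

lemma mmult_alpha_star_alpha_star_left:
  "x \<in> hypercube D \<Longrightarrow>
    mmult D (mmult D (alpha_star i) (alpha_star j)) M x y = coord_sign i x * coord_sign j x * M x y"
  by (rule mmult_diagonal_left) (simp_all add: mmult_alpha_star_left alpha_star_eq)

lemma alpha_star_double_commutator_entry:
  assumes "x \<in> hypercube D" and "y \<in> hypercube D"
  shows "mmult D (mmult D (alpha_star i) (alpha_star j)) B x y
          - mmult D (mmult D (alpha_star i) B) (alpha_star j) x y
          - mmult D (mmult D (alpha_star j) B) (alpha_star i) x y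
          + mmult D (mmult D B (alpha_star i)) (alpha_star j) x y
       = B x y * (coord_sign i x - coord_sign i y) * (coord_sign j x - coord_sign j y)"
  using assms
  by (simp add: mmult_alpha_star_left mmult_alpha_star_right mmult_alpha_star_alpha_star_left
      algebra_simps)

lemma coord_sign_product_eq_0_iff:
  "B x y * (coord_sign i x - coord_sign i y) * (coord_sign j x - coord_sign j y) = 0
    \<longleftrightarrow> B x y = 0 \<or> x i = y i \<or> x j = y j"
  by (auto simp: coord_sign_def)

lemma nonempty_card_neq_1_iff:
  fixes S :: "'a::linorder set"
  shows "S \<noteq> {} \<and> card S \<noteq> 1 \<longleftrightarrow> (\<exists>a\<in>S. \<exists>b\<in>S. a < b)"
proof
  assume "S \<noteq> {} \<and> card S \<noteq> 1"
  then obtain a b where "a \<in> S" "b \<in> S" "a \<noteq> b"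
    by (metis ex_in_conv is_singletonI' is_singleton_altdef)
  then show "\<exists>a\<in>S. \<exists>b\<in>S. a < b" by (metis neqE)
next
  assume "\<exists>a\<in>S. \<exists>b\<in>S. a < b"
  then show "S \<noteq> {} \<and> card S \<noteq> 1" by (auto simp: card_1_singleton_iff)
qed

lemma not_eq_not_adjacent_iff:
  assumes "x \<in> hypercube D" and "y \<in> hypercube D"
  shows "x \<noteq> y \<and> \<not> hc_adjacent D x y \<longleftrightarrow>
    (\<exists>i j. 1 \<le> i \<and> i < j \<and> j \<le> D \<and> x i \<noteq> y i \<and> x j \<noteq> y j)"
proof -
  let ?S = "{i \<in> {1..D}. x i \<noteq> y i}"
  have "x = y \<longleftrightarrow> ?S = {}"
    using assms by (auto simp: hypercube_def)
  then have "x \<noteq> y \<and> \<not> hc_adjacent D x y \<longleftrightarrow> ?S \<noteq> {} \<and> card ?S \<noteq> 1"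
    by (simp add: hc_adjacent_def)
  also have "\<dots> \<longleftrightarrow> (\<exists>i\<in>?S. \<exists>j\<in>?S. i < j)"
    by (rule nonempty_card_neq_1_iff)
  finally show ?thesis
    by (simp add: Bex_def) (meson less_imp_le_nat le_trans)
qed

theorem proposition7p3:
  fixes D :: nat and B :: "(nat \<Rightarrow> bool) \<Rightarrow> (nat \<Rightarrow> bool) \<Rightarrow> real"
  assumes "D \<ge> 1"
  shows "A_like D B \<longleftrightarrow>
    mat_eq_on D (mmult D B (hc_adj_matrix D)) (mmult D (hc_adj_matrix D) B) \<and>
    (\<forall>i j. 1 \<le> i \<and> i < j \<and> j \<le> D \<longrightarrow>
       (\<forall>x\<in>hypercube D. \<forall>y\<in>hypercube D.
          mmult D (mmult D (alpha_star i) (alpha_star j)) B x y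
          - mmult D (mmult D (alpha_star i) B) (alpha_star j) x y
          - mmult D (mmult D (alpha_star j) B) (alpha_star i) x y
          + mmult D (mmult D B (alpha_star i)) (alpha_star j) x y = 0))"
proof -
  let ?H = "hypercube D"
  have double_commutator_vanishes_iff:
    "(\<forall>x\<in>?H. \<forall>y\<in>?H.
          mmult D (mmult D (alpha_star i) (alpha_star j)) B x y
          - mmult D (mmult D (alpha_star i) B) (alpha_star j) x y
          - mmult D (mmult D (alpha_star j) B) (alpha_star i) x y
          + mmult D (mmult D B (alpha_star i)) (alpha_star j) x y = 0)
      \<longleftrightarrow> (\<forall>x\<in>?H. \<forall>y\<in>?H. B x y = 0 \<or> x i = y i \<or> x j = y j)" for i j
    by (intro ball_cong refl)
      (simp only: alpha_star_double_commutator_entry coord_sign_product_eq_0_iff)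
  have "(\<forall>x\<in>?H. \<forall>y\<in>?H. x \<noteq> y \<and> \<not> hc_adjacent D x y \<longrightarrow> B x y = 0)
    \<longleftrightarrow> (\<forall>x\<in>?H. \<forall>y\<in>?H. \<forall>i j. 1 \<le> i \<and> i < j \<and> j \<le> D \<longrightarrow>
           B x y = 0 \<or> x i = y i \<or> x j = y j)"
    by (intro ball_cong refl) (auto simp only: not_eq_not_adjacent_iff)
  also have "\<dots> \<longleftrightarrow> (\<forall>i j. 1 \<le> i \<and> i < j \<and> j \<le> D \<longrightarrow>
           (\<forall>x\<in>?H. \<forall>y\<in>?H. B x y = 0 \<or> x i = y i \<or> x j = y j))"
    by blast
  finally show ?thesis
    unfolding A_like_def double_commutator_vanishes_iff by (rule arg_cong)
qed

end
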